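(* Let $m,n\ge1$ and consider the quantum Boltzmann machine $\mathrm{QBM}_{m,n}$ on $(\mathbb{C}^2)^{\otimes(m+n)}$, whose first $m$ qubits are visible ($\mathcal{H}_\mathrm{V}=(\mathbb{C}^2)^{\otimes m}$) and last $n$ qubits hidden ($\mathcal{H}_\mathrm{L}=(\mathbb{C}^2)^{\otimes n}$), with Hamiltonian $$\mathrm{H}=-\sum_{i=1}^{m+n}b_i\sigma^z_i-\sum_{i>j}w_{ij}\sigma^z_i\sigma^z_j-\sum_{i=1}^{m+n}\Gamma_i\sigma^x_i,$$ real parameters $b_i,w_{ij},\Gamma_i$, and density operator $\rho=e^{\mathrm{H}}/\mathrm{Tr}\,e^{\mathrm{H}}$. Then $\rho$ is a CQ-LVM if and only if $\Gamma_i=0$ for all $i\le m$.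
   Context: $\sigma^k_i=\mathrm{I}^{\otimes(i-1)}\otimes\sigma^k\otimes\mathrm{I}^{\otimes(m+n-i)}$ for $k\in\{x,z\}$, with $\sigma^z=\begin{psmallmatrix}1&0\\0&-1\end{psmallmatrix}$, $\sigma^x=\begin{psmallmatrix}0&1\\1&0\end{psmallmatrix}$ and $\mathrm{I}$ the $2\times2$ identity. A CQ-LVM is a density operator on $\mathcal{H}_\mathrm{V}\otimes\mathcal{H}_\mathrm{L}$ that is block diagonal with respect to the standard (computational) basis $\{\mathbf{v}_i\}$ of $\mathcal{H}_\mathrm{V}$, i.e. of the form $\sum_i\mathbf{v}_i\mathbf{v}_i^\dagger\otimes\rho_\mathrm{L}(i)$. *)

theory Defs
  imports Complex_Main "Jordan_Normal_Form.Matrix"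
begin

text \<open>Kronecker (tensor) product; the index of the left factor is the most significant one.\<close>
definition kron :: "complex mat \<Rightarrow> complex mat \<Rightarrow> complex mat" where
  "kron A B = mat (dim_row A * dim_row B) (dim_col A * dim_col B)
     (\<lambda>(i,j). A $$ (i div dim_row B, j div dim_col B) * B $$ (i mod dim_row B, j mod dim_col B))"

definition msum :: "nat \<Rightarrow> ('i \<Rightarrow> complex mat) \<Rightarrow> 'i set \<Rightarrow> complex mat" where
  "msum d f S = mat d d (\<lambda>ij. \<Sum>a\<in>S. f a $$ ij)"

definition mat_exp :: "complex mat \<Rightarrow> complex mat" where
  "mat_exp A = mat (dim_row A) (dim_col A) (\<lambda>ij. \<Sum>k. (A ^\<^sub>m k) $$ ij / of_nat (fact k))"

definition mtrace :: "complex mat \<Rightarrow> complex" where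
  "mtrace A = (\<Sum>i<dim_row A. A $$ (i,i))"

definition hermitian :: "complex mat \<Rightarrow> bool" where
  "hermitian A \<longleftrightarrow> square_mat A \<and> (\<forall>i<dim_row A. \<forall>j<dim_row A. A $$ (i,j) = cnj (A $$ (j,i)))"

definition psd :: "complex mat \<Rightarrow> bool" where
  "psd A \<longleftrightarrow> square_mat A \<and> (\<forall>v \<in> carrier_vec (dim_row A).
      (let q = (\<Sum>i<dim_row A. \<Sum>j<dim_row A. cnj (v $ i) * A $$ (i,j) * v $ j) in Im q = 0 \<and> Re q \<ge> 0))"

definition density_op :: "nat \<Rightarrow> complex mat \<Rightarrow> bool" where
  "density_op d A \<longleftrightarrow> A \<in> carrier_mat d d \<and> hermitian A \<and> psd A \<and> mtrace A = 1"

definition outer :: "complex vec \<Rightarrow> complex mat" where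
  "outer v = mat (dim_vec v) (dim_vec v) (\<lambda>(a,b). v $ a * cnj (v $ b))"

definition sigma_z :: "complex mat" where
  "sigma_z = mat 2 2 (\<lambda>(i,j). if i = j then (if i = 0 then 1 else -1) else 0)"

definition sigma_x :: "complex mat" where
  "sigma_x = mat 2 2 (\<lambda>(i,j). if i = j then 0 else 1)"

fun id_pow :: "nat \<Rightarrow> complex mat" where
  "id_pow 0 = 1\<^sub>m 1"
| "id_pow (Suc k) = kron (1\<^sub>m 2) (id_pow k)"

text \<open>sigma^k_i = I^{\<otimes>(i-1)} \<otimes> sigma^k \<otimes> I^{\<otimes>(N-i)} on N qubits (i is 1-based).\<close>
definition sigma_at :: "nat \<Rightarrow> complex mat \<Rightarrow> nat \<Rightarrow> complex mat" where
  "sigma_at N s i = kron (kron (id_pow (i - 1)) s) (id_pow (N - i))"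

definition qbm_hamiltonian ::
  "nat \<Rightarrow> nat \<Rightarrow> (nat \<Rightarrow> real) \<Rightarrow> (nat \<Rightarrow> nat \<Rightarrow> real) \<Rightarrow> (nat \<Rightarrow> real) \<Rightarrow> complex mat" where
  "qbm_hamiltonian m n b w \<Gamma> =
     (let N = m + n; d = 2 ^ N in
      mat d d (\<lambda>ij.
          - (\<Sum>i\<in>{1..N}. complex_of_real (b i) * sigma_at N sigma_z i $$ ij)
          - (\<Sum>(i,j)\<in>{(i,j). i \<in> {1..N} \<and> j \<in> {1..N} \<and> j < i}.
                complex_of_real (w i j) * (sigma_at N sigma_z i * sigma_at N sigma_z j) $$ ij)
          - (\<Sum>i\<in>{1..N}. complex_of_real (\<Gamma> i) * sigma_at N sigma_x i $$ ij)))"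

definition qbm_state ::
  "nat \<Rightarrow> nat \<Rightarrow> (nat \<Rightarrow> real) \<Rightarrow> (nat \<Rightarrow> nat \<Rightarrow> real) \<Rightarrow> (nat \<Rightarrow> real) \<Rightarrow> complex mat" where
  "qbm_state m n b w \<Gamma> =
     (let E = mat_exp (qbm_hamiltonian m n b w \<Gamma>) in (1 / mtrace E) \<cdot>\<^sub>m E)"

definition CQ_LVM :: "nat \<Rightarrow> nat \<Rightarrow> complex mat \<Rightarrow> bool" where
  "CQ_LVM m n \<rho> \<longleftrightarrow> density_op (2 ^ (m + n)) \<rho> \<and>
     (\<exists>\<rho>L :: nat \<Rightarrow> complex mat. (\<forall>i < 2 ^ m. \<rho>L i \<in> carrier_mat (2 ^ n) (2 ^ n)) \<and>
        \<rho> = msum (2 ^ (m + n)) (\<lambda>i. kron (outer (unit_vec (2 ^ m) i)) (\<rho>L i)) {..< 2 ^ m})"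

end

(*
  In the computational basis the Hamiltonian H is a real symmetric matrix: the sigma^z terms are
  diagonal, and sigma^x_i links exactly the basis states that differ in qubit i, with entry -Gamma_i.
  If Gamma_i = 0 for every visible qubit, H only links states with the same visible part, so H,
  its powers and e^H are block diagonal, which is the CQ-LVM form.  Conversely, conjugating
  H + c I (c large) by the diagonal sign matrix S = prod_{Gamma_i > 0} sigma^z_i makes all its
  entries nonnegative, hence S e^H S = e^-c e^(S (H + c I) S) >= e^-c (I + |H + c I|) entrywise:
  e^H is nonzero wherever H is, in particular between different visible blocks as soon as some
  visible Gamma_i is nonzero.  That rho is a density operator follows from e^H = (e^(H/2))^2 with
  e^(H/2) symmetric.
*)

theory Submission
  imports Defs
begin

section \<open>Bits of basis indices\<close>

lemma nat_eq_iff_div_mod: "(i::nat) = j \<longleftrightarrow> i div p = j div p \<and> i mod p = j mod p"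
  by (metis div_mult_mod_eq)

lemma bits_agree_except_iff_div_mod:
  fixes x y :: nat
  shows "(\<forall>j. j \<noteq> a \<longrightarrow> bit x j = bit y j) \<longleftrightarrow> x div 2^a div 2 = y div 2^a div 2 \<and> x mod 2^a = y mod 2^a"
proof -
  have "x div 2^a div 2 = y div 2^a div 2 \<longleftrightarrow> drop_bit (Suc a) x = drop_bit (Suc a) y"
    by (simp add: drop_bit_eq_div power_Suc2 div_mult2_eq[symmetric] mult.commute)
  also have "\<dots> \<longleftrightarrow> (\<forall>j>a. bit x j = bit y j)"
  proof -
    have "drop_bit (Suc a) x = drop_bit (Suc a) y \<longleftrightarrow> (\<forall>j. bit x (Suc a + j) = bit y (Suc a + j))"
      by (auto simp: bit_eq_iff bit_drop_bit_eq)
    then show ?thesis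
      by (metis less_iff_Suc_add add_Suc)
  qed
  finally have high: "x div 2^a div 2 = y div 2^a div 2 \<longleftrightarrow> (\<forall>j>a. bit x j = bit y j)" .
  have low: "x mod 2^a = y mod 2^a \<longleftrightarrow> (\<forall>j<a. bit x j = bit y j)"
    by (auto simp: take_bit_eq_mod[symmetric] bit_eq_iff bit_take_bit_iff)
  show ?thesis
    unfolding high low using nat_neq_iff by blast
qed

lemma of_bool_bit_eq_div_mod: "of_bool (bit (x::nat) a) = x div 2^a mod 2"
  by (simp add: bit_iff_odd of_bool_odd_eq_mod_2)

lemma nat_eq_iff_bits_except:
  "(x::nat) = y \<longleftrightarrow> (\<forall>j. j \<noteq> a \<longrightarrow> bit x j = bit y j) \<and> bit x a = bit y a"
  by (metis bit_eq_iff)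

lemma eq_flip_bit_iff:
  "(y::nat) = flip_bit a x \<longleftrightarrow> (\<forall>j. j \<noteq> a \<longrightarrow> bit x j = bit y j) \<and> bit x a \<noteq> bit y a"
  by (auto simp: bit_flip_bit_iff intro!: bit_eqI)

lemma self_neq_flip_bit [simp]: "(x::nat) \<noteq> flip_bit a x"
  by (auto simp: bit_eq_iff bit_flip_bit_iff)

lemma flip_bit_flip_bit: "flip_bit a (flip_bit a x) = (x::nat)"
  by (rule bit_eqI) (auto simp: bit_flip_bit_iff)

lemma flip_bit_eq_flip_bit_iff: "flip_bit a x = flip_bit b (x::nat) \<longleftrightarrow> a = b"
proof
  assume "flip_bit a x = flip_bit b x"
  then have "bit (flip_bit a x) a = bit (flip_bit b x) a" by simp
  then show "a = b" by (auto simp: bit_flip_bit_iff)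
qed simp

lemma flip_bit_div_two_pow:
  assumes "a < n"
  shows "flip_bit a x div 2^n = (x::nat) div 2^n"
proof -
  have "drop_bit n (flip_bit a x) = drop_bit n x"
    by (rule bit_eqI) (use assms in \<open>auto simp: bit_drop_bit_eq bit_flip_bit_iff\<close>)
  then show ?thesis by (simp add: drop_bit_eq_div)
qed

lemma flip_bit_less_two_pow:
  assumes "(x::nat) < 2^N" "a < N"
  shows "flip_bit a x < 2^N"
proof -
  have "take_bit N x = x"
    using assms(1) by (simp add: take_bit_nat_eq_self_iff)
  then have "take_bit N (flip_bit a x) = flip_bit a x"
    using assms(2) by (simp add: take_bit_flip_bit_eq)
  then show ?thesis by (metis take_bit_nat_less_exp)
qed

definition spin :: "nat \<Rightarrow> nat \<Rightarrow> real" where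
  "spin a x = (if bit x a then -1 else 1)"

lemma spin_flip_bit: "spin a' (flip_bit a x) = (if a' = a then - spin a' x else spin a' x)"
  by (auto simp: spin_def bit_flip_bit_iff)

lemma spin_mult_self: "spin a x * spin a x = 1"
  by (simp add: spin_def)

section \<open>Pauli operators in the computational basis\<close>

lemma kron_carrier: "A \<in> carrier_mat a a' \<Longrightarrow> B \<in> carrier_mat c c' \<Longrightarrow> kron A B \<in> carrier_mat (a*c) (a'*c')"
  by (simp add: kron_def)

lemma index_kron: "A \<in> carrier_mat a a' \<Longrightarrow> B \<in> carrier_mat c c' \<Longrightarrow> i < a*c \<Longrightarrow> j < a'*c' \<Longrightarrow>
  kron A B $$ (i,j) = A $$ (i div c, j div c') * B $$ (i mod c, j mod c')"
  by (simp add: kron_def)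

lemma id_pow_eq_one_mat: "id_pow k = 1\<^sub>m (2^k)"
proof (induction k)
  case (Suc k)
  show ?case
  proof (rule eq_matI)
    fix i j assume "i < dim_row (1\<^sub>m (2 ^ Suc k) :: complex mat)" "j < dim_col (1\<^sub>m (2 ^ Suc k) :: complex mat)"
    then have ij: "i < 2 * 2^k" "j < 2 * 2^k" by auto
    then have "i div 2^k < 2" "j div 2^k < 2"
      by (auto simp: less_mult_imp_div_less mult.commute)
    then show "id_pow (Suc k) $$ (i, j) = 1\<^sub>m (2 ^ Suc k) $$ (i, j)"
      using ij Suc by (simp add: index_kron[of _ 2 2 _ "2^k" "2^k"] nat_eq_iff_div_mod[of i j "2^k"])
  qed (use Suc in \<open>auto simp: kron_def\<close>)
qed simp

text \<open>Qubit \<open>i\<close> of \<open>N\<close> is bit \<open>N - i\<close> of a basis index, since \<^const>\<open>kron\<close> puts its left factor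
  in the most significant position.\<close>

lemma index_sigma_at:
  assumes s: "s \<in> carrier_mat 2 2" and i: "1 \<le> i" "i \<le> N" and x: "x < 2^N" and y: "y < 2^N"
  shows "sigma_at N s i $$ (x,y) = (if \<forall>j. j \<noteq> N - i \<longrightarrow> bit x j = bit y j
      then s $$ (of_bool (bit x (N - i)), of_bool (bit y (N - i))) else 0)"
proof -
  define P Q where "P = (2::nat)^(i-1)" and "Q = (2::nat)^(N-i)"
  have PQ: "P * 2 * Q = 2^N"
    unfolding P_def Q_def using i by (simp flip: power_Suc2 power_add)
  have k1: "kron (1\<^sub>m P) s \<in> carrier_mat (P*2) (P*2)" by (rule kron_carrier[OF _ s]) auto
  have xq: "x div Q < P*2" "y div Q < P*2" using x y PQ
    by (metis less_mult_imp_div_less mult.commute)+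
  have "sigma_at N s i $$ (x,y) = kron (1\<^sub>m P) s $$ (x div Q, y div Q) * 1\<^sub>m Q $$ (x mod Q, y mod Q)"
    unfolding sigma_at_def id_pow_eq_one_mat P_def[symmetric] Q_def[symmetric]
    by (rule index_kron[OF k1, of _ Q Q]) (use x y PQ in auto)
  also have "\<dots> = (if x div Q div 2 = y div Q div 2 \<and> x mod Q = y mod Q
      then s $$ (x div Q mod 2, y div Q mod 2) else 0)"
    using xq s by (simp add: index_kron[OF _ s, of "1\<^sub>m P" P P] less_mult_imp_div_less Q_def)
  finally show ?thesis
    unfolding Q_def bits_agree_except_iff_div_mod of_bool_bit_eq_div_mod .
qed

lemma index_sigma_z_at:
  assumes "1 \<le> i" "i \<le> N" "x < 2^N" "y < 2^N"
  shows "sigma_at N sigma_z i $$ (x,y) = (if x = y then complex_of_real (spin (N - i) x) else 0)"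
proof -
  have c: "sigma_z \<in> carrier_mat 2 2" by (simp add: sigma_z_def)
  show ?thesis
    unfolding index_sigma_at[OF c assms] nat_eq_iff_bits_except[of x y "N - i"]
    by (auto simp: sigma_z_def spin_def)
qed

lemma index_sigma_x_at:
  assumes "1 \<le> i" "i \<le> N" "x < 2^N" "y < 2^N"
  shows "sigma_at N sigma_x i $$ (x,y) = (if y = flip_bit (N - i) x then 1 else 0)"
proof -
  have c: "sigma_x \<in> carrier_mat 2 2" by (simp add: sigma_x_def)
  show ?thesis
    unfolding index_sigma_at[OF c assms] eq_flip_bit_iff
    by (auto simp: sigma_x_def)
qed

lemma sigma_at_carrier:
  assumes "s \<in> carrier_mat 2 2" "1 \<le> i" "i \<le> N"
  shows "sigma_at N s i \<in> carrier_mat (2^N) (2^N)"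
proof -
  have "(2::nat)^(i-1) * 2 * 2^(N-i) = 2^N"
    using assms by (simp flip: power_Suc2 power_add)
  then show ?thesis
    unfolding sigma_at_def id_pow_eq_one_mat
    by (metis kron_carrier assms(1) one_carrier_mat)
qed

lemma index_sigma_z_at_mult:
  assumes i: "1 \<le> i" "i \<le> N" and j: "1 \<le> j" "j \<le> N" and x: "x < 2^N" and y: "y < 2^N"
  shows "(sigma_at N sigma_z i * sigma_at N sigma_z j) $$ (x,y)
    = (if x = y then complex_of_real (spin (N - i) x * spin (N - j) x) else 0)"
proof -
  have "sigma_at N sigma_z i \<in> carrier_mat (2^N) (2^N)" "sigma_at N sigma_z j \<in> carrier_mat (2^N) (2^N)"
    using i j by (auto intro!: sigma_at_carrier simp: sigma_z_def)
  then have "(sigma_at N sigma_z i * sigma_at N sigma_z j) $$ (x,y)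
      = (\<Sum>u<2^N. sigma_at N sigma_z i $$ (x,u) * sigma_at N sigma_z j $$ (u,y))"
    using x y by (simp add: scalar_prod_def lessThan_atLeast0)
  also have "\<dots> = (\<Sum>u<2^N. if u = x then sigma_at N sigma_z i $$ (x,x) * sigma_at N sigma_z j $$ (x,y) else 0)"
    using x by (intro sum.cong refl) (auto simp: index_sigma_z_at[OF i])
  finally show ?thesis
    using x y by (simp add: index_sigma_z_at[OF i] index_sigma_z_at[OF j])
qed

section \<open>Real matrices as functions\<close>

text \<open>A real \<open>d \<times> d\<close> matrix is a function \<^typ>\<open>nat \<Rightarrow> nat \<Rightarrow> real\<close> of which only the entries
  below \<open>d\<close> matter; \<open>mpow\<close> and \<open>mexp\<close> are its powers and its exponential.\<close>

fun mpow :: "nat \<Rightarrow> (nat \<Rightarrow> nat \<Rightarrow> real) \<Rightarrow> nat \<Rightarrow> nat \<Rightarrow> nat \<Rightarrow> real" where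
  "mpow d a 0 = (\<lambda>x y. if x = y then 1 else 0)"
| "mpow d a (Suc k) = (\<lambda>x y. \<Sum>u<d. mpow d a k x u * a u y)"

definition mexp :: "nat \<Rightarrow> (nat \<Rightarrow> nat \<Rightarrow> real) \<Rightarrow> nat \<Rightarrow> nat \<Rightarrow> real" where
  "mexp d a x y = (\<Sum>k. mpow d a k x y / fact k)"

definition quad_form :: "nat \<Rightarrow> (nat \<Rightarrow> nat \<Rightarrow> real) \<Rightarrow> (nat \<Rightarrow> real) \<Rightarrow> real" where
  "quad_form d a v = (\<Sum>x<d. \<Sum>y<d. v x * a x y * v y)"

lemma index_pow_mat_of_real:
  assumes A: "A \<in> carrier_mat d d" and a: "\<And>x y. x < d \<Longrightarrow> y < d \<Longrightarrow> A $$ (x,y) = complex_of_real (a x y)"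
    and "x < d" "y < d"
  shows "(A ^\<^sub>m k) $$ (x,y) = complex_of_real (mpow d a k x y)"
  using assms(3,4)
proof (induction k arbitrary: y)
  case (Suc k)
  have "(A ^\<^sub>m Suc k) $$ (x,y) = (\<Sum>u<d. (A ^\<^sub>m k) $$ (x,u) * A $$ (u,y))"
    using Suc.prems A by (simp add: scalar_prod_def lessThan_atLeast0)
  also have "\<dots> = (\<Sum>u<d. complex_of_real (mpow d a k x u * a u y))"
    using Suc by (intro sum.cong) (auto simp: a)
  finally show ?case by simp
qed (use A in auto)

lemma abs_le_sum_abs_entries:
  fixes a :: "nat \<Rightarrow> nat \<Rightarrow> real"
  assumes "u < d" "v < d"
  shows "\<bar>a u v\<bar> \<le> (\<Sum>x<d. \<Sum>y<d. \<bar>a x y\<bar>)"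
proof -
  have "\<bar>a u v\<bar> \<le> (\<Sum>y<d. \<bar>a u y\<bar>)"
    using assms by (intro member_le_sum) auto
  also have "\<dots> \<le> (\<Sum>x<d. \<Sum>y<d. \<bar>a x y\<bar>)"
    using assms by (intro member_le_sum[of u]) (auto intro: sum_nonneg)
  finally show ?thesis .
qed

lemma abs_mpow_le:
  assumes K: "\<And>u v. u < d \<Longrightarrow> v < d \<Longrightarrow> \<bar>a u v\<bar> \<le> K" and "0 \<le> K" and "y < d"
  shows "\<bar>mpow d a k x y\<bar> \<le> (real d * K) ^ k"
  using \<open>y < d\<close>
proof (induction k arbitrary: y)
  case (Suc k)
  have "\<bar>mpow d a (Suc k) x y\<bar> \<le> (\<Sum>u<d. \<bar>mpow d a k x u\<bar> * \<bar>a u y\<bar>)"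
    by (simp add: sum_abs flip: abs_mult)
  also have "\<dots> \<le> (\<Sum>u<d. (real d * K) ^ k * K)"
    using Suc \<open>0 \<le> K\<close> by (intro sum_mono mult_mono K) auto
  finally show ?case by (simp add: algebra_simps)
qed simp

lemma summable_norm_mpow:
  assumes "y < d"
  shows "summable (\<lambda>k. norm (mpow d a k x y / fact k))"
proof -
  define K where "K = (\<Sum>u<d. \<Sum>v<d. \<bar>a u v\<bar>)"
  have "\<bar>mpow d a k x y\<bar> \<le> (real d * K) ^ k" for k
    by (rule abs_mpow_le) (use assms abs_le_sum_abs_entries in \<open>auto simp: K_def sum_nonneg\<close>)
  then show ?thesis
    by (intro summable_comparison_test[OF _ summable_exp[of "real d * K"]]) (auto simp: divide_simps)
qed

lemma summable_mpow: "y < d \<Longrightarrow> summable (\<lambda>k. mpow d a k x y / fact k)"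
  using summable_norm_cancel[OF summable_norm_mpow] .

lemma index_mat_exp_of_real:
  assumes A: "A \<in> carrier_mat d d"
    and entries: "\<And>x y. x < d \<Longrightarrow> y < d \<Longrightarrow> A $$ (x,y) = complex_of_real (a x y)"
    and "x < d" "y < d"
  shows "mat_exp A $$ (x,y) = complex_of_real (mexp d a x y)"
proof -
  have "mat_exp A $$ (x,y) = (\<Sum>k. complex_of_real (mpow d a k x y / fact k))"
    using assms by (simp add: mat_exp_def index_pow_mat_of_real[OF A entries])
  also have "\<dots> = complex_of_real (mexp d a x y)"
    unfolding mexp_def by (rule suminf_of_real[symmetric], rule summable_mpow) fact
  finally show ?thesis .
qed

lemma mpow_1: "x < d \<Longrightarrow> mpow d a 1 x y = a x y"
  by (simp add: if_distrib[of "\<lambda>z. z * _"] cong: if_cong)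

lemma mpow_add:
  assumes "y < d"
  shows "mpow d a (i + j) x y = (\<Sum>u<d. mpow d a i x u * mpow d a j u y)"
  using assms
proof (induction j arbitrary: y)
  case 0
  then show ?case by (simp add: if_distrib[of "\<lambda>z. _ * z"] cong: if_cong)
next
  case (Suc j)
  have "mpow d a (i + Suc j) x y = (\<Sum>v<d. (\<Sum>u<d. mpow d a i x u * mpow d a j u v) * a v y)"
    using Suc by simp
  also have "\<dots> = (\<Sum>u<d. mpow d a i x u * (\<Sum>v<d. mpow d a j u v * a v y))"
    by (simp add: sum_distrib_left sum_distrib_right mult.assoc) (rule sum.swap)
  finally show ?case by simp
qed

lemma mpow_sym:
  assumes sym: "\<And>u v. u < d \<Longrightarrow> v < d \<Longrightarrow> a u v = a v u" and "x < d" "y < d"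
  shows "mpow d a k x y = mpow d a k y x"
  using assms(2,3)
proof (induction k arbitrary: x y)
  case (Suc k)
  have "mpow d a (Suc k) y x = mpow d a (1 + k) y x" by simp
  also have "\<dots> = (\<Sum>u<d. a y u * mpow d a k u x)"
    using Suc.prems by (simp only: mpow_add mpow_1)
  also have "\<dots> = (\<Sum>u<d. mpow d a k x u * a u y)"
    using Suc by (intro sum.cong refl) (auto simp: sym)
  finally show ?case by simp
qed simp

lemma mexp_sym:
  "(\<And>u v. u < d \<Longrightarrow> v < d \<Longrightarrow> a u v = a v u) \<Longrightarrow> x < d \<Longrightarrow> y < d \<Longrightarrow> mexp d a x y = mexp d a y x"
  unfolding mexp_def using mpow_sym by presburger

lemma mpow_add_diag:
  assumes "y < d"
  shows "mpow d (\<lambda>u v. a u v + (if u = v then c else 0)) k x y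
     = (\<Sum>i\<le>k. of_nat (k choose i) * c ^ i * mpow d a (k - i) x y)"
  using assms
proof (induction k arbitrary: y)
  case (Suc k)
  let ?b = "\<lambda>u v. a u v + (if u = v then c else 0)"
  have "mpow d ?b (Suc k) x y = (\<Sum>u<d. mpow d ?b k x u * a u y) + mpow d ?b k x y * c"
    using Suc.prems by (simp add: distrib_left sum.distrib if_distrib[of "\<lambda>z. _ * z"] cong: if_cong)
  also have "(\<Sum>u<d. mpow d ?b k x u * a u y)
      = (\<Sum>i\<le>k. of_nat (k choose i) * c ^ i * mpow d a (Suc k - i) x y)"
    using Suc.IH
    by (simp add: sum_distrib_right sum_distrib_left mult.assoc Suc_diff_le)
      (subst sum.swap, simp add: mult.assoc)
  also have "mpow d ?b k x y * c = (\<Sum>i\<le>k. of_nat (k choose i) * c ^ Suc i * mpow d a (k - i) x y)"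
    using Suc by (simp add: sum_distrib_left sum_distrib_right mult_ac)
  also have "(\<Sum>i\<le>k. of_nat (k choose i) * c ^ i * mpow d a (Suc k - i) x y)
      = mpow d a (Suc k) x y + (\<Sum>i\<le>k. of_nat (k choose Suc i) * c ^ Suc i * mpow d a (k - i) x y)"
  proof -
    have "(\<Sum>i\<le>k. of_nat (k choose i) * c ^ i * mpow d a (Suc k - i) x y)
        = (\<Sum>i\<le>Suc k. of_nat (k choose i) * c ^ i * mpow d a (Suc k - i) x y)"
      by simp
    then show ?thesis
      by (simp only: sum.atMost_Suc_shift) simp
  qed
  finally have "mpow d ?b (Suc k) x y
      = mpow d a (Suc k) x y + (\<Sum>i\<le>k. of_nat (Suc k choose Suc i) * c ^ Suc i * mpow d a (k - i) x y)"
    by (simp add: sum.distrib[symmetric] algebra_simps)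
  then show ?case
    by (simp add: sum.atMost_Suc_shift del: sum.atMost_Suc)
qed simp

lemma exp_eq_suminf: "exp (c::real) = (\<Sum>i. c ^ i / fact i)"
  using exp_converges[of c] by (simp add: sums_iff field_simps)

lemma summable_norm_exp: "summable (\<lambda>i. norm ((c::real) ^ i / fact i))"
  using summable_exp[of "\<bar>c\<bar>"] by (simp add: abs_mult power_abs field_simps)

lemma mexp_add_diag:
  assumes "y < d"
  shows "mexp d (\<lambda>u v. a u v + (if u = v then c else 0)) x y = exp c * mexp d a x y"
proof -
  have "exp c * mexp d a x y = (\<Sum>k. \<Sum>i\<le>k. c ^ i / fact i * (mpow d a (k - i) x y / fact (k - i)))"
    unfolding mexp_def exp_eq_suminf
    by (rule Cauchy_product[OF summable_norm_exp summable_norm_mpow[OF assms]])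
  also have "\<dots> = mexp d (\<lambda>u v. a u v + (if u = v then c else 0)) x y"
    unfolding mexp_def mpow_add_diag[OF assms]
    by (intro suminf_cong) (simp add: sum_divide_distrib binomial_fact field_simps)
  finally show ?thesis ..
qed

lemma mpow_scale: "mpow d (\<lambda>u v. t * a u v) k x y = t ^ k * mpow d a k x y"
  by (induction k arbitrary: y) (simp_all add: sum_distrib_left mult_ac)

lemma mexp_square:
  assumes "x < d" "y < d"
  shows "(\<Sum>u<d. mexp d a x u * mexp d a u y) = mexp d (\<lambda>u v. 2 * a u v) x y"
proof -
  let ?p = "\<lambda>k x y. mpow d a k x y / fact k"
  let ?c = "\<lambda>u k. \<Sum>i\<le>k. ?p i x u * ?p (k - i) u y"
  have "mexp d a x u * mexp d a u y = (\<Sum>k. ?c u k)" if "u < d" for u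
    unfolding mexp_def using that assms
    by (intro Cauchy_product summable_norm_mpow)
  moreover have "summable (?c u)" if "u < d" for u
    using that assms by (intro summable_Cauchy_product summable_norm_mpow)
  ultimately have "(\<Sum>u<d. mexp d a x u * mexp d a u y) = (\<Sum>k. \<Sum>u<d. ?c u k)"
    by (subst suminf_sum) auto
  also have "\<dots> = (\<Sum>k. 2 ^ k * mpow d a k x y / fact k)"
  proof (rule suminf_cong)
    fix k
    have "(\<Sum>u<d. ?c u k) = (\<Sum>i\<le>k. (\<Sum>u<d. mpow d a i x u * mpow d a (k - i) u y) / (fact i * fact (k - i)))"
      by (subst sum.swap) (simp add: sum_divide_distrib)
    also have "\<dots> = (\<Sum>i\<le>k. of_nat (k choose i) * mpow d a k x y / fact k)"
      using assms by (intro sum.cong refl) (simp add: mpow_add[symmetric] binomial_fact field_simps)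
    also have "\<dots> = 2 ^ k * mpow d a k x y / fact k"
      by (simp add: sum_distrib_right[symmetric] sum_divide_distrib[symmetric] flip: of_nat_sum choose_row_sum)
    finally show "(\<Sum>u<d. ?c u k) = 2 ^ k * mpow d a k x y / fact k" .
  qed
  finally show ?thesis
    by (simp add: mexp_def mpow_scale)
qed

lemma quad_form_divide: "quad_form d (\<lambda>x y. a x y / c) v = quad_form d a v / c"
  by (simp add: quad_form_def sum_divide_distrib)

lemma quad_form_mexp_nonneg:
  assumes sym: "\<And>u v. u < d \<Longrightarrow> v < d \<Longrightarrow> a u v = a v u"
  shows "0 \<le> quad_form d (mexp d a) v"
proof -
  txt \<open>\<open>mexp d a\<close> is the square of the symmetric matrix \<open>mexp d (a / 2)\<close>.\<close>
  let ?B = "mexp d (\<lambda>u v. a u v / 2)"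
  have "mexp d a x y = (\<Sum>u<d. ?B u x * ?B u y)" if "x < d" "y < d" for x y
  proof -
    have "mexp d a x y = (\<Sum>u<d. ?B x u * ?B u y)"
      using mexp_square[OF that, of "\<lambda>u v. a u v / 2"] by simp
    also have "\<dots> = (\<Sum>u<d. ?B u x * ?B u y)"
      using that sym by (intro sum.cong refl) (simp add: mexp_sym[of d "\<lambda>u v. a u v / 2" x])
    finally show ?thesis .
  qed
  then have "quad_form d (mexp d a) v = (\<Sum>x<d. \<Sum>y<d. \<Sum>u<d. (?B u x * v x) * (?B u y * v y))"
    unfolding quad_form_def by (intro sum.cong refl) (simp add: sum_distrib_left sum_distrib_right mult_ac)
  also have "\<dots> = (\<Sum>u<d. \<Sum>x<d. \<Sum>y<d. (?B u x * v x) * (?B u y * v y))"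
    by (subst sum.swap) (rule sum.cong[OF refl], rule sum.swap)
  also have "\<dots> = (\<Sum>u<d. (\<Sum>x<d. ?B u x * v x) * (\<Sum>y<d. ?B u y * v y))"
    by (simp add: sum_product)
  also have "\<dots> \<ge> 0"
    by (intro sum_nonneg) simp
  finally show ?thesis .
qed

lemma mpow_sign_conj:
  assumes s: "\<And>u. u < d \<Longrightarrow> s u * s u = 1"
    and a: "\<And>u v. u < d \<Longrightarrow> v < d \<Longrightarrow> a u v = s u * s v * b u v"
    and "x < d" "y < d"
  shows "mpow d a k x y = s x * s y * mpow d b k x y"
  using assms(4)
proof (induction k arbitrary: y)
  case 0
  then show ?case using s \<open>x < d\<close> by simp
next
  case (Suc k)
  have "mpow d a (Suc k) x y = (\<Sum>u<d. s x * s y * (s u * s u) * (mpow d b k x u * b u y))"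
    using Suc by (auto simp: a mult_ac intro!: sum.cong)
  then show ?case
    using s by (simp add: sum_distrib_left)
qed

lemma mexp_sign_conj:
  assumes "\<And>u. u < d \<Longrightarrow> s u * s u = 1"
    and "\<And>u v. u < d \<Longrightarrow> v < d \<Longrightarrow> a u v = s u * s v * b u v"
    and "x < d" "y < d"
  shows "mexp d a x y = s x * s y * mexp d b x y"
proof -
  have "mexp d a x y = (\<Sum>k. s x * s y * (mpow d b k x y / fact k))"
    unfolding mexp_def using mpow_sign_conj[OF assms] by simp
  also have "\<dots> = s x * s y * mexp d b x y"
    unfolding mexp_def by (rule suminf_mult[OF summable_mpow[OF \<open>y < d\<close>]])
  finally show ?thesis .
qed

lemma mpow_nonneg:
  assumes "\<And>u v. u < d \<Longrightarrow> v < d \<Longrightarrow> 0 \<le> a u v" and "y < d"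
  shows "0 \<le> mpow d a k x y"
  using assms(2) by (induction k arbitrary: y) (auto intro!: sum_nonneg mult_nonneg_nonneg assms(1))

lemma mexp_ge_one_plus:
  assumes nonneg: "\<And>u v. u < d \<Longrightarrow> v < d \<Longrightarrow> 0 \<le> a u v" and "x < d" "y < d"
  shows "(if x = y then 1 else 0) + a x y \<le> mexp d a x y"
proof -
  have "(\<Sum>k\<in>{0,1}. mpow d a k x y / fact k) \<le> mexp d a x y"
    unfolding mexp_def using assms
    by (intro sum_le_suminf summable_mpow) (auto intro!: divide_nonneg_nonneg mpow_nonneg)
  then show ?thesis
    using \<open>x < d\<close> by (simp add: mpow_1[unfolded One_nat_def] del: mpow.simps(2))
qed

lemma mexp_signed_pos:
  assumes s: "\<And>u. u < d \<Longrightarrow> s u * s u = 1"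
    and signs: "\<And>u v. u < d \<Longrightarrow> v < d \<Longrightarrow> u \<noteq> v \<Longrightarrow> a u v = s u * s v * \<bar>a u v\<bar>"
    and xy: "x < d" "y < d" "x = y \<or> a x y \<noteq> 0"
  shows "0 < s x * s y * mexp d a x y"
proof -
  txt \<open>Shifting by \<open>c\<close> makes the diagonal nonnegative, so all of \<open>b\<close> has the sign pattern of \<open>s\<close>.\<close>
  define c where "c = (\<Sum>u<d. \<Sum>v<d. \<bar>a u v\<bar>)"
  define b where "b = (\<lambda>u v. a u v + (if u = v then c else 0))"
  have b_signs: "b u v = s u * s v * \<bar>b u v\<bar>" if "u < d" "v < d" for u v
  proof (cases "u = v")
    case True
    have "0 \<le> b u u"
      using abs_le_sum_abs_entries[OF that(1) that(1), of a] by (simp add: b_def c_def)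
    then show ?thesis using True s that by simp
  next
    case False
    then have "b u v = a u v" by (simp add: b_def)
    with signs[OF that False] show ?thesis by metis
  qed
  have pos: "0 < mexp d (\<lambda>u v. \<bar>b u v\<bar>) x y"
  proof -
    have "0 < (if x = y then 1 else 0) + \<bar>b x y\<bar>"
      using xy(3) by (auto simp: b_def)
    also have "\<dots> \<le> mexp d (\<lambda>u v. \<bar>b u v\<bar>) x y"
      using mexp_ge_one_plus[of d "\<lambda>u v. \<bar>b u v\<bar>" x y] xy by simp
    finally show ?thesis .
  qed
  have "mexp d (\<lambda>u v. \<bar>b u v\<bar>) x y = (s x * s x) * (s y * s y) * mexp d (\<lambda>u v. \<bar>b u v\<bar>) x y"
    using s xy by simp
  also have "\<dots> = s x * s y * mexp d b x y"
    using mexp_sign_conj[OF s b_signs xy(1,2)] by (simp add: mult_ac)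
  also have "mexp d b x y = exp c * mexp d a x y"
    unfolding b_def by (rule mexp_add_diag[OF xy(2)])
  finally have "0 < exp c * (s x * s y * mexp d a x y)"
    using pos by (simp add: mult_ac)
  then show ?thesis
    by (simp add: zero_less_mult_iff)
qed

lemma mexp_block_zero:
  assumes zero: "\<And>u v. u < d \<Longrightarrow> v < d \<Longrightarrow> f u \<noteq> f v \<Longrightarrow> a u v = 0"
    and "x < d" "y < d" "f x \<noteq> f y"
  shows "mexp d a x y = 0"
proof -
  have "mpow d a k x y = 0" for k
    using assms(3,4)
  proof (induction k arbitrary: y)
    case (Suc k)
    have "mpow d a k x u * a u y = 0" if "u < d" for u
      using Suc zero[of u y] that by (cases "f u = f x") auto
    then have "(\<Sum>u<d. mpow d a k x u * a u y) = 0"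
      by (intro sum.neutral) auto
    then show ?case by simp
  qed auto
  then show ?thesis by (simp add: mexp_def)
qed

section \<open>Density operators and CQ-LVMs\<close>

lemma complex_quad_form_of_real:
  fixes r :: "nat \<Rightarrow> nat \<Rightarrow> real" and v :: "nat \<Rightarrow> complex"
  assumes sym: "\<And>i j. i < d \<Longrightarrow> j < d \<Longrightarrow> r i j = r j i"
  shows "(\<Sum>i<d. \<Sum>j<d. cnj (v i) * complex_of_real (r i j) * v j)
    = complex_of_real (quad_form d r (\<lambda>i. Re (v i)) + quad_form d r (\<lambda>i. Im (v i)))"
    (is "?q = _")
proof (rule complex_eqI)
  have "Im ?q = (\<Sum>i<d. \<Sum>j<d. r i j * (Re (v i) * Im (v j))) - (\<Sum>i<d. \<Sum>j<d. r i j * (Im (v i) * Re (v j)))"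
    by (simp add: Im_sum sum_subtractf[symmetric] algebra_simps)
  also have "(\<Sum>i<d. \<Sum>j<d. r i j * (Im (v i) * Re (v j))) = (\<Sum>j<d. \<Sum>i<d. r i j * (Im (v i) * Re (v j)))"
    by (rule sum.swap)
  also have "\<dots> = (\<Sum>i<d. \<Sum>j<d. r i j * (Re (v i) * Im (v j)))"
    using sym by (intro sum.cong refl) (simp add: mult.commute)
  finally show "Im ?q = Im (complex_of_real (quad_form d r (\<lambda>i. Re (v i)) + quad_form d r (\<lambda>i. Im (v i))))"
    by simp
  show "Re ?q = Re (complex_of_real (quad_form d r (\<lambda>i. Re (v i)) + quad_form d r (\<lambda>i. Im (v i))))"
    unfolding quad_form_def by (simp add: Re_sum sum.distrib[symmetric] algebra_simps)
qed

lemma density_op_of_real_entries: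
  assumes A: "A \<in> carrier_mat d d"
    and entries: "\<And>x y. x < d \<Longrightarrow> y < d \<Longrightarrow> A $$ (x,y) = complex_of_real (r x y)"
    and sym: "\<And>x y. x < d \<Longrightarrow> y < d \<Longrightarrow> r x y = r y x"
    and psd: "\<And>v. 0 \<le> quad_form d r v"
    and trace: "(\<Sum>x<d. r x x) = 1"
  shows "density_op d A"
  unfolding density_op_def hermitian_def psd_def mtrace_def
proof (intro conjI ballI allI impI)
  fix v :: "complex vec"
  have "(\<Sum>i<d. \<Sum>j<d. cnj (v $ i) * A $$ (i,j) * v $ j)
      = (\<Sum>i<d. \<Sum>j<d. cnj (v $ i) * complex_of_real (r i j) * v $ j)"
    by (intro sum.cong refl) (simp add: entries)
  also have "\<dots> = complex_of_real (quad_form d r (\<lambda>i. Re (v $ i)) + quad_form d r (\<lambda>i. Im (v $ i)))"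
    by (rule complex_quad_form_of_real[OF sym])
  finally show "let q = \<Sum>i<dim_row A. \<Sum>j<dim_row A. cnj (v $ i) * A $$ (i, j) * v $ j in Im q = 0 \<and> 0 \<le> Re q"
    using A psd by (simp add: add_nonneg_nonneg)
next
  have "(\<Sum>x<d. A $$ (x,x)) = complex_of_real (\<Sum>x<d. r x x)"
    by (simp add: entries)
  then show "(\<Sum>i<dim_row A. A $$ (i, i)) = 1"
    using A trace by simp
qed (use A entries sym in auto)

lemma index_sum_kron_outer_unit:
  assumes L: "\<And>i. i < 2^m \<Longrightarrow> L i \<in> carrier_mat (2^n) (2^n)"
    and x: "x < 2^(m+n)" and y: "y < 2^(m+n)"
  shows "msum (2^(m+n)) (\<lambda>i. kron (outer (unit_vec (2^m) i)) (L i)) {..<2^m} $$ (x,y)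
    = (if x div 2^n = y div 2^n then L (x div 2^n) $$ (x mod 2^n, y mod 2^n) else 0)"
proof -
  have x': "x < 2^m * 2^n" and y': "y < 2^m * 2^n"
    using x y by (auto simp: power_add)
  then have xd: "x div 2^n < 2^m" and yd: "y div 2^n < 2^m"
    by (auto simp: less_mult_imp_div_less)
  have outer: "outer (unit_vec (2^m) i) \<in> carrier_mat (2^m) (2^m)" for i
    by (simp add: outer_def)
  have "msum (2^(m+n)) (\<lambda>i. kron (outer (unit_vec (2^m) i)) (L i)) {..<2^m} $$ (x,y)
      = (\<Sum>i<2^m. kron (outer (unit_vec (2^m) i)) (L i) $$ (x,y))"
    using x y by (simp add: msum_def)
  also have "\<dots> = (\<Sum>i<2^m. if i = x div 2^n then
      (if x div 2^n = y div 2^n then L (x div 2^n) $$ (x mod 2^n, y mod 2^n) else 0) else 0)"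
  proof (intro sum.cong refl)
    fix i :: nat assume "i \<in> {..<2^m}"
    then have Li: "L i \<in> carrier_mat (2^n) (2^n)" by (simp add: L)
    show "kron (outer (unit_vec (2^m) i)) (L i) $$ (x,y) = (if i = x div 2^n then
        (if x div 2^n = y div 2^n then L (x div 2^n) $$ (x mod 2^n, y mod 2^n) else 0) else 0)"
      unfolding index_kron[OF outer Li x' y'] using xd yd \<open>i \<in> {..<2^m}\<close> by (simp add: outer_def)
  qed
  also have "\<dots> = (if x div 2^n = y div 2^n then L (x div 2^n) $$ (x mod 2^n, y mod 2^n) else 0)"
    using xd by simp
  finally show ?thesis .
qed

lemma block_diagonal_eq_sum_kron_outer_unit:
  fixes \<rho> :: "complex mat" and m n :: nat
  defines "L \<equiv> \<lambda>i. mat (2^n) (2^n) (\<lambda>(a,c). \<rho> $$ (i * 2^n + a, i * 2^n + c))"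
  assumes carrier: "\<rho> \<in> carrier_mat (2^(m+n)) (2^(m+n))"
    and zero: "\<And>x y. x < 2^(m+n) \<Longrightarrow> y < 2^(m+n) \<Longrightarrow> x div 2^n \<noteq> y div 2^n \<Longrightarrow> \<rho> $$ (x,y) = 0"
  shows "\<rho> = msum (2^(m+n)) (\<lambda>i. kron (outer (unit_vec (2^m) i)) (L i)) {..<2^m}"
proof (rule eq_matI)
  have L: "L i \<in> carrier_mat (2^n) (2^n)" for i
    by (simp add: L_def)
  fix x y assume "x < dim_row (msum (2^(m+n)) (\<lambda>i. kron (outer (unit_vec (2^m) i)) (L i)) {..<2^m})"
    "y < dim_col (msum (2^(m+n)) (\<lambda>i. kron (outer (unit_vec (2^m) i)) (L i)) {..<2^m})"
  then have x: "x < 2^(m+n)" and y: "y < 2^(m+n)" by (auto simp: msum_def)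
  show "\<rho> $$ (x,y) = msum (2^(m+n)) (\<lambda>i. kron (outer (unit_vec (2^m) i)) (L i)) {..<2^m} $$ (x,y)"
  proof (cases "x div 2^n = y div 2^n")
    case True
    have "msum (2^(m+n)) (\<lambda>i. kron (outer (unit_vec (2^m) i)) (L i)) {..<2^m} $$ (x,y)
        = L (x div 2^n) $$ (x mod 2^n, y mod 2^n)"
      using True by (simp add: index_sum_kron_outer_unit[OF L x y])
    also have "\<dots> = \<rho> $$ (x div 2^n * 2^n + x mod 2^n, y div 2^n * 2^n + y mod 2^n)"
      using True by (simp add: L_def)
    also have "\<dots> = \<rho> $$ (x,y)"
      by (simp only: div_mult_mod_eq)
    finally show ?thesis by (rule sym)
  next
    case False
    then show ?thesis
      unfolding index_sum_kron_outer_unit[OF L x y] using zero[OF x y False] by simp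
  qed
qed (use carrier in \<open>simp_all add: msum_def\<close>)

lemma CQ_LVM_iff_block_diagonal:
  "CQ_LVM m n \<rho> \<longleftrightarrow> density_op (2^(m+n)) \<rho> \<and>
     (\<forall>x < 2^(m+n). \<forall>y < 2^(m+n). x div 2^n \<noteq> y div 2^n \<longrightarrow> \<rho> $$ (x,y) = 0)"
proof (intro iffI conjI allI impI)
  assume "CQ_LVM m n \<rho>"
  then show "density_op (2^(m+n)) \<rho>" by (simp add: CQ_LVM_def)
  from \<open>CQ_LVM m n \<rho>\<close> obtain L where L: "\<And>i. i < 2^m \<Longrightarrow> L i \<in> carrier_mat (2^n) (2^n)"
    and \<rho>: "\<rho> = msum (2^(m+n)) (\<lambda>i. kron (outer (unit_vec (2^m) i)) (L i)) {..<2^m}"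
    unfolding CQ_LVM_def by blast
  fix x y :: nat assume "x < 2^(m+n)" "y < 2^(m+n)" "x div 2^n \<noteq> y div 2^n"
  then show "\<rho> $$ (x,y) = 0"
    unfolding \<rho> by (simp add: index_sum_kron_outer_unit[OF L])
next
  assume "density_op (2^(m+n)) \<rho> \<and>
     (\<forall>x < 2^(m+n). \<forall>y < 2^(m+n). x div 2^n \<noteq> y div 2^n \<longrightarrow> \<rho> $$ (x,y) = 0)"
  then have dens: "density_op (2^(m+n)) \<rho>"
    and zero: "\<And>x y. x < 2^(m+n) \<Longrightarrow> y < 2^(m+n) \<Longrightarrow> x div 2^n \<noteq> y div 2^n \<Longrightarrow> \<rho> $$ (x,y) = 0"
    by simp_all
  from dens have "\<rho> \<in> carrier_mat (2^(m+n)) (2^(m+n))"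
    by (simp add: density_op_def)
  from block_diagonal_eq_sum_kron_outer_unit[OF this zero] dens show "CQ_LVM m n \<rho>"
    unfolding CQ_LVM_def by (intro conjI exI) (auto simp: msum_def)
qed

section \<open>The Hamiltonian\<close>

definition ising_energy :: "nat \<Rightarrow> (nat \<Rightarrow> real) \<Rightarrow> (nat \<Rightarrow> nat \<Rightarrow> real) \<Rightarrow> nat \<Rightarrow> real" where
  "ising_energy N b w x =
     - (\<Sum>i\<in>{1..N}. b i * spin (N - i) x)
     - (\<Sum>(i,j)\<in>{(i,j). i \<in> {1..N} \<and> j \<in> {1..N} \<and> j < i}. w i j * (spin (N - i) x * spin (N - j) x))"

definition qbm_ham :: "nat \<Rightarrow> (nat \<Rightarrow> real) \<Rightarrow> (nat \<Rightarrow> nat \<Rightarrow> real) \<Rightarrow> (nat \<Rightarrow> real) \<Rightarrow> nat \<Rightarrow> nat \<Rightarrow> real" where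
  "qbm_ham N b w \<Gamma> x y =
     (if x = y then ising_energy N b w x else 0) - (\<Sum>i\<in>{1..N}. if y = flip_bit (N - i) x then \<Gamma> i else 0)"

lemma qbm_hamiltonian_carrier: "qbm_hamiltonian m n b w \<Gamma> \<in> carrier_mat (2^(m+n)) (2^(m+n))"
  by (simp add: qbm_hamiltonian_def Let_def)

lemma index_qbm_hamiltonian:
  assumes x: "x < 2^(m+n)" and y: "y < 2^(m+n)"
  shows "qbm_hamiltonian m n b w \<Gamma> $$ (x,y) = complex_of_real (qbm_ham (m+n) b w \<Gamma> x y)"
proof -
  define N where "N = m + n"
  note x' = x[folded N_def] and y' = y[folded N_def]
  have "qbm_hamiltonian m n b w \<Gamma> $$ (x,y) =
     - (\<Sum>i\<in>{1..N}. complex_of_real (b i) * sigma_at N sigma_z i $$ (x,y))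
     - (\<Sum>(i,j)\<in>{(i,j). i \<in> {1..N} \<and> j \<in> {1..N} \<and> j < i}.
          complex_of_real (w i j) * (sigma_at N sigma_z i * sigma_at N sigma_z j) $$ (x,y))
     - (\<Sum>i\<in>{1..N}. complex_of_real (\<Gamma> i) * sigma_at N sigma_x i $$ (x,y))"
    unfolding qbm_hamiltonian_def Let_def N_def[symmetric] using x' y' by (simp only: index_mat)
  also have "\<dots> = complex_of_real (qbm_ham N b w \<Gamma> x y)"
  proof -
    have "(\<Sum>i\<in>{1..N}. complex_of_real (b i) * sigma_at N sigma_z i $$ (x,y))
        = (if x = y then complex_of_real (\<Sum>i\<in>{1..N}. b i * spin (N - i) x) else 0)"
      using x' y' by (simp add: index_sigma_z_at)
    moreover have "(\<Sum>(i,j)\<in>{(i,j). i \<in> {1..N} \<and> j \<in> {1..N} \<and> j < i}.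
          complex_of_real (w i j) * (sigma_at N sigma_z i * sigma_at N sigma_z j) $$ (x,y))
        = (if x = y then complex_of_real (\<Sum>(i,j)\<in>{(i,j). i \<in> {1..N} \<and> j \<in> {1..N} \<and> j < i}.
          w i j * (spin (N - i) x * spin (N - j) x)) else 0)"
      using x' y' by (simp add: index_sigma_z_at_mult case_prod_unfold)
    moreover have "(\<Sum>i\<in>{1..N}. complex_of_real (\<Gamma> i) * sigma_at N sigma_x i $$ (x,y))
        = complex_of_real (\<Sum>i\<in>{1..N}. if y = flip_bit (N - i) x then \<Gamma> i else 0)"
      using x' y' by (auto simp: index_sigma_x_at of_real_sum intro!: sum.cong)
    ultimately show ?thesis
      by (simp add: qbm_ham_def ising_energy_def)
  qed
  finally show ?thesis unfolding N_def .
qed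

lemma qbm_ham_sym: "qbm_ham N b w \<Gamma> x y = qbm_ham N b w \<Gamma> y x"
proof -
  have "y = flip_bit a x \<longleftrightarrow> x = flip_bit a y" for a
    by (metis flip_bit_flip_bit)
  then show ?thesis by (simp add: qbm_ham_def)
qed

lemma qbm_ham_flip_bit:
  assumes k: "k \<in> {1..N}"
  shows "qbm_ham N b w \<Gamma> x (flip_bit (N - k) x) = - \<Gamma> k"
proof -
  have "(\<Sum>i\<in>{1..N}. if flip_bit (N - k) x = flip_bit (N - i) x then \<Gamma> i else 0)
      = (\<Sum>i\<in>{1..N}. if i = k then \<Gamma> i else 0)"
    using k by (intro sum.cong refl) (auto simp: flip_bit_eq_flip_bit_iff)
  then show ?thesis
    using k by (simp add: qbm_ham_def)
qed

text \<open>Conjugation by the diagonal matrix with entries \<open>field_sign N \<Gamma>\<close> makes all off-diagonal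
  entries of the Hamiltonian nonnegative.\<close>

definition field_sign :: "nat \<Rightarrow> (nat \<Rightarrow> real) \<Rightarrow> nat \<Rightarrow> real" where
  "field_sign N \<Gamma> x = (\<Prod>i \<in> {i \<in> {1..N}. 0 < \<Gamma> i}. spin (N - i) x)"

lemma field_sign_mult_self: "field_sign N \<Gamma> x * field_sign N \<Gamma> x = 1"
  by (simp add: field_sign_def spin_mult_self flip: prod.distrib)

lemma field_sign_flip_bit:
  assumes k: "k \<in> {1..N}"
  shows "field_sign N \<Gamma> x * field_sign N \<Gamma> (flip_bit (N - k) x) = (if 0 < \<Gamma> k then -1 else 1)"
proof -
  have "field_sign N \<Gamma> x * field_sign N \<Gamma> (flip_bit (N - k) x)
      = (\<Prod>i \<in> {i \<in> {1..N}. 0 < \<Gamma> i}. if i = k then -1 else 1)"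
    unfolding field_sign_def prod.distrib[symmetric]
  proof (intro prod.cong refl)
    fix i assume "i \<in> {i \<in> {1..N}. 0 < \<Gamma> i}"
    then have "N - i = N - k \<longleftrightarrow> i = k" using k by auto
    then show "spin (N - i) x * spin (N - i) (flip_bit (N - k) x) = (if i = k then -1 else 1)"
      by (simp add: spin_flip_bit spin_mult_self)
  qed
  also have "\<dots> = (if 0 < \<Gamma> k then -1 else 1)"
    using k by (simp add: prod.If_cases)
  finally show ?thesis .
qed

lemma qbm_ham_signs:
  assumes "x \<noteq> y"
  shows "qbm_ham N b w \<Gamma> x y = field_sign N \<Gamma> x * field_sign N \<Gamma> y * \<bar>qbm_ham N b w \<Gamma> x y\<bar>"
proof (cases "\<exists>k\<in>{1..N}. y = flip_bit (N - k) x")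
  case True
  then obtain k where k: "k \<in> {1..N}" and y: "y = flip_bit (N - k) x" by blast
  show ?thesis
    unfolding y qbm_ham_flip_bit[OF k] field_sign_flip_bit[OF k] by simp
next
  case False
  then show ?thesis
    using assms by (simp add: qbm_ham_def)
qed

lemma qbm_ham_eq_0_across_blocks:
  assumes visible: "\<forall>i\<in>{1..m}. \<Gamma> i = 0" and xy: "x div 2^n \<noteq> y div 2^n"
  shows "qbm_ham (m + n) b w \<Gamma> x y = 0"
proof -
  have "(if y = flip_bit (m + n - i) x then \<Gamma> i else 0) = 0" if "i \<in> {1..m+n}" for i
  proof (cases "i \<le> m")
    case False
    then have "flip_bit (m + n - i) x div 2^n = x div 2^n"
      using that by (intro flip_bit_div_two_pow) auto
    then show ?thesis using xy by auto
  qed (use visible that in auto)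
  moreover have "x \<noteq> y" using xy by auto
  ultimately show ?thesis
    by (simp add: qbm_ham_def)
qed

section \<open>The QBM state\<close>

lemma mexp_qbm_ham_pos:
  assumes "x < 2^N" "y < 2^N" "x = y \<or> qbm_ham N b w \<Gamma> x y \<noteq> 0"
  shows "0 < field_sign N \<Gamma> x * field_sign N \<Gamma> y * mexp (2^N) (qbm_ham N b w \<Gamma>) x y"
  using assms by (intro mexp_signed_pos field_sign_mult_self qbm_ham_signs)

lemma qbm_state_carrier: "qbm_state m n b w \<Gamma> \<in> carrier_mat (2^(m+n)) (2^(m+n))"
  using qbm_hamiltonian_carrier[of m n b w \<Gamma>] by (simp add: qbm_state_def mat_exp_def Let_def)

lemma index_qbm_state:
  fixes m n :: nat and b \<Gamma> :: "nat \<Rightarrow> real" and w :: "nat \<Rightarrow> nat \<Rightarrow> real"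
  defines "d \<equiv> 2^(m+n)" and "h \<equiv> qbm_ham (m+n) b w \<Gamma>"
  assumes "x < d" "y < d"
  shows "qbm_state m n b w \<Gamma> $$ (x,y) = complex_of_real (mexp d h x y / (\<Sum>z<d. mexp d h z z))"
proof -
  have E: "mat_exp (qbm_hamiltonian m n b w \<Gamma>) $$ (x,y) = complex_of_real (mexp d h x y)"
    if "x < d" "y < d" for x y
    using that qbm_hamiltonian_carrier unfolding d_def h_def
    by (intro index_mat_exp_of_real index_qbm_hamiltonian) auto
  have carrier: "mat_exp (qbm_hamiltonian m n b w \<Gamma>) \<in> carrier_mat d d"
    using qbm_hamiltonian_carrier[of m n b w \<Gamma>] by (simp add: mat_exp_def d_def)
  then have "mtrace (mat_exp (qbm_hamiltonian m n b w \<Gamma>)) = complex_of_real (\<Sum>z<d. mexp d h z z)"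
    by (simp add: mtrace_def E)
  then show ?thesis
    using assms carrier by (simp add: qbm_state_def Let_def E)
qed

lemma qbm_partition_pos: "0 < (\<Sum>z<2^N. mexp (2^N) (qbm_ham N b w \<Gamma>) z z)"
proof (rule sum_pos)
  fix z :: nat assume "z \<in> {..<2^N}"
  then show "0 < mexp (2^N) (qbm_ham N b w \<Gamma>) z z"
    using mexp_qbm_ham_pos[of z N z b w \<Gamma>] by (simp add: field_sign_mult_self)
qed (simp_all add: lessThan_empty_iff)

lemma qbm_state_density_op: "density_op (2^(m+n)) (qbm_state m n b w \<Gamma>)"
proof -
  define d h where "d = (2::nat)^(m+n)" and "h = qbm_ham (m+n) b w \<Gamma>"
  define Z where "Z = (\<Sum>z<d. mexp d h z z)"
  have "0 < Z"
    unfolding Z_def d_def h_def by (rule qbm_partition_pos)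
  show ?thesis
    unfolding d_def[symmetric]
  proof (rule density_op_of_real_entries[where r = "\<lambda>x y. mexp d h x y / Z"])
    show "qbm_state m n b w \<Gamma> $$ (x,y) = complex_of_real (mexp d h x y / Z)" if "x < d" "y < d" for x y
      using that index_qbm_state by (simp add: d_def h_def Z_def)
    show "mexp d h x y / Z = mexp d h y x / Z" if "x < d" "y < d" for x y
      using that by (simp add: mexp_sym[OF qbm_ham_sym] h_def)
    show "0 \<le> quad_form d (\<lambda>x y. mexp d h x y / Z) v" for v
    proof -
      have "0 \<le> quad_form d (mexp d h) v"
        by (rule quad_form_mexp_nonneg) (simp add: h_def qbm_ham_sym)
      then show ?thesis
        using \<open>0 < Z\<close> by (simp add: quad_form_divide)
    qed
    show "(\<Sum>x<d. mexp d h x x / Z) = 1"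
      using \<open>0 < Z\<close> by (simp add: Z_def flip: sum_divide_distrib)
  qed (simp add: qbm_state_carrier d_def)
qed

lemma qbm_state_eq_0_across_blocks:
  assumes "\<forall>i\<in>{1..m}. \<Gamma> i = 0" "x < 2^(m+n)" "y < 2^(m+n)" "x div 2^n \<noteq> y div 2^n"
  shows "qbm_state m n b w \<Gamma> $$ (x,y) = 0"
proof -
  have "mexp (2^(m+n)) (qbm_ham (m+n) b w \<Gamma>) x y = 0"
    using assms by (intro mexp_block_zero[where f = "\<lambda>u. u div 2^n"] qbm_ham_eq_0_across_blocks)
  then show ?thesis
    using assms by (simp add: index_qbm_state)
qed

lemma qbm_state_flip_bit_neq_0:
  assumes k: "k \<in> {1..m+n}" and "\<Gamma> k \<noteq> 0" and x: "x < 2^(m+n)"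
  shows "qbm_state m n b w \<Gamma> $$ (x, flip_bit (m + n - k) x) \<noteq> 0"
proof -
  let ?y = "flip_bit (m + n - k) x"
  have y: "?y < 2^(m+n)"
    using x k by (intro flip_bit_less_two_pow) auto
  have "0 < field_sign (m+n) \<Gamma> x * field_sign (m+n) \<Gamma> ?y * mexp (2^(m+n)) (qbm_ham (m+n) b w \<Gamma>) x ?y"
    using x y k \<open>\<Gamma> k \<noteq> 0\<close> by (intro mexp_qbm_ham_pos) (auto simp: qbm_ham_flip_bit)
  then have "mexp (2^(m+n)) (qbm_ham (m+n) b w \<Gamma>) x ?y \<noteq> 0"
    by auto
  moreover have "0 < (\<Sum>z<2^(m+n). mexp (2^(m+n)) (qbm_ham (m+n) b w \<Gamma>) z z)"
    by (rule qbm_partition_pos)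
  ultimately have "mexp (2^(m+n)) (qbm_ham (m+n) b w \<Gamma>) x ?y
      / (\<Sum>z<2^(m+n). mexp (2^(m+n)) (qbm_ham (m+n) b w \<Gamma>) z z) \<noteq> 0"
    by simp
  then show ?thesis
    using x y by (simp only: index_qbm_state of_real_eq_0_iff not_False_eq_True)
qed

theorem mainTheorem10:
  fixes m n :: nat and b \<Gamma> :: "nat \<Rightarrow> real" and w :: "nat \<Rightarrow> nat \<Rightarrow> real"
  assumes "m \<ge> 1" and "n \<ge> 1"
  shows "CQ_LVM m n (qbm_state m n b w \<Gamma>) \<longleftrightarrow> (\<forall>i \<in> {1..m}. \<Gamma> i = 0)"
proof -
  have "CQ_LVM m n (qbm_state m n b w \<Gamma>) \<longleftrightarrow> (\<forall>x < 2^(m+n). \<forall>y < 2^(m+n).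
      x div 2^n \<noteq> y div 2^n \<longrightarrow> qbm_state m n b w \<Gamma> $$ (x,y) = 0)"
    by (simp add: CQ_LVM_iff_block_diagonal qbm_state_density_op)
  also have "\<dots> \<longleftrightarrow> (\<forall>i \<in> {1..m}. \<Gamma> i = 0)"
  proof (intro iffI ballI)
    fix k assume block: "\<forall>x < 2^(m+n). \<forall>y < 2^(m+n).
      x div 2^n \<noteq> y div 2^n \<longrightarrow> qbm_state m n b w \<Gamma> $$ (x,y) = 0" and k: "k \<in> {1..m}"
    have "(2::nat)^n \<le> 2^(m + n - k)" "(2::nat)^(m + n - k) < 2^(m+n)"
      using k by (auto intro: power_increasing power_strict_increasing)
    then have "qbm_state m n b w \<Gamma> $$ (0, flip_bit (m + n - k) 0) = 0"
      using block by (auto simp: div_greater_zero_iff)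
    then show "\<Gamma> k = 0"
      using qbm_state_flip_bit_neq_0[of k m n \<Gamma> 0] k by auto
  qed (use qbm_state_eq_0_across_blocks in blast)
  finally show ?thesis .
qed

end
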